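(* Let $M\ge1$, $m=2M+1$, $h>0$, $T>0$, and let $D$, $I^{(-1)}$, $e_m$ be as in the context. For every $\mu>0$ the matrix $\mu^{-1}D^{-1}+I^{(-1)}$ is nonsingular, so $z(\mu):=e_m^{\mathsf T}\left(\mu^{-1}D^{-1}+I^{(-1)}\right)^{-1}e_m$ is well defined; setting $z(0):=0$ (equivalently $z(\mu)=\mu e_m^{\mathsf T}D(I_m+\mu I^{(-1)}D)^{-1}e_m$), one has $z(\mu)\in[0,2)$ for all $\mu\ge 0$.
   Context: Sinc time points: $t_j=\dfrac{T e^{jh}}{1+e^{jh}}$, $j=-M,\dots,M$. $D=h\,\mathrm{diag}\big(t_{-M}(T-t_{-M})/T,\dots,t_M(T-t_M)/T\big)\in\mathbb{R}^{m\times m}$. $I^{(-1)}\in\mathbb{R}^{m\times m}$ is the Toeplitz matrix with entries $I^{(-1)}_{l,j}=\frac12+\int_0^{l-j}\frac{\sin(\pi t)}{\pi t}\,dt$, $l,j=1,\dots,m$. $e_m=(1,\dots,1)^{\mathsf T}\in\mathbb{R}^m$. *)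

theory Defs
  imports "HOL-Analysis.Analysis" "Jordan_Normal_Form.Gauss_Jordan_Elimination"
begin

definition sinc_pt :: "real \<Rightarrow> real \<Rightarrow> int \<Rightarrow> real" where
  "sinc_pt h T j = T * exp (real_of_int j * h) / (1 + exp (real_of_int j * h))"

(* D = h diag(t_j (T - t_j)/T), j=-M..M; row/col index i in {0..<2M+1} corresponds to j = i - M *)
definition sinc_D :: "nat \<Rightarrow> real \<Rightarrow> real \<Rightarrow> real mat" where
  "sinc_D M h T = mat (2*M+1) (2*M+1) (\<lambda>(i,k).
     if i = k then h * (sinc_pt h T (int i - int M) * (T - sinc_pt h T (int i - int M)) / T)
     else 0)"

definition sinc_int :: "real \<Rightarrow> real" where
  "sinc_int x = (LBINT t=0..x. sin (pi * t) / (pi * t))"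

definition sinc_Iinv :: "nat \<Rightarrow> real mat" where
  "sinc_Iinv m = mat m m (\<lambda>(l,j). 1/2 + sinc_int (real_of_int (int l - int j)))"

definition ones_vec :: "nat \<Rightarrow> real vec" where
  "ones_vec m = vec m (\<lambda>_. 1)"

definition minv :: "real mat \<Rightarrow> real mat" where
  "minv A = (case mat_inverse A of Some B \<Rightarrow> B | None \<Rightarrow> 0\<^sub>m (dim_row A) (dim_row A))"

definition sinc_z :: "nat \<Rightarrow> real \<Rightarrow> real \<Rightarrow> real \<Rightarrow> real" where
  "sinc_z M h T \<mu> = (if \<mu> = 0 then 0 else
     scalar_prod (ones_vec (2*M+1))
       (minv ((1/\<mu>) \<cdot>\<^sub>m minv (sinc_D M h T) + sinc_Iinv (2*M+1)) *\<^sub>v ones_vec (2*M+1)))"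

end

theory Submission
  imports Defs "Jordan_Normal_Form.Determinant"
begin

text \<open>
  Let A = mu^-1 D^-1 + I^(-1) with mu > 0. Since sin(pi t)/(pi t) is even, its integral
  from 0 is odd, so I^(-1) is 1/2 times the all-ones matrix plus a skew-symmetric matrix.
  As D is diagonal with positive entries d_i, the quadratic form of A is
  x^T A x = mu^-1 sum_i x_i^2/d_i + (e^T x)^2/2, which exceeds (e^T x)^2/2 for x ~= 0.
  Hence A is nonsingular, and for y = A^-1 e the number z = e^T y = y^T A y
  satisfies z > z^2/2, i.e. 0 < z < 2.
\<close>

lemma quadratic_form_expand:
  fixes A :: "'a :: comm_semiring_0 mat"
  assumes A: "A \<in> carrier_mat n n" and x: "x \<in> carrier_vec n"
  shows "x \<bullet> (A *\<^sub>v x) = (\<Sum>i<n. \<Sum>j<n. x$i * A$$(i,j) * x$j)"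
  using A x by (auto simp: scalar_prod_def lessThan_atLeast0 sum_distrib_left mult.assoc
      intro!: sum.cong)

lemma quadratic_form_add:
  fixes A B :: "'a :: comm_semiring_0 mat"
  assumes A: "A \<in> carrier_mat n n" and B: "B \<in> carrier_mat n n" and x: "x \<in> carrier_vec n"
  shows "x \<bullet> ((A + B) *\<^sub>v x) = x \<bullet> (A *\<^sub>v x) + x \<bullet> (B *\<^sub>v x)"
proof -
  have "A + B \<in> carrier_mat n n" using A B by simp
  then show ?thesis
    using A B by (auto simp: quadratic_form_expand[OF _ x] distrib_left distrib_right
        sum.distrib[symmetric] intro!: sum.cong)
qed

lemma quadratic_form_smult:
  fixes A :: "'a :: comm_semiring_0 mat"
  assumes A: "A \<in> carrier_mat n n" and x: "x \<in> carrier_vec n"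
  shows "x \<bullet> ((c \<cdot>\<^sub>m A) *\<^sub>v x) = c * (x \<bullet> (A *\<^sub>v x))"
proof -
  have "c \<cdot>\<^sub>m A \<in> carrier_mat n n" using A by simp
  then show ?thesis
    using A by (auto simp: quadratic_form_expand[OF _ x] sum_distrib_left mult.assoc
        mult.left_commute intro!: sum.cong)
qed

lemma quadratic_form_mat_diag:
  fixes d :: "nat \<Rightarrow> 'a :: comm_semiring_1"
  assumes x: "x \<in> carrier_vec n"
  shows "x \<bullet> (mat_diag n d *\<^sub>v x) = (\<Sum>i<n. d i * (x$i)^2)"
proof -
  have entry: "x$i * mat_diag n d $$ (i,j) * x$j = (if i = j then d i * (x$i)^2 else 0)"
    if "i < n" "j < n" for i j
    using that by (simp add: mat_diag_def power2_eq_square ac_simps)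
  have "x \<bullet> (mat_diag n d *\<^sub>v x) = (\<Sum>i<n. \<Sum>j<n. if i = j then d i * (x$i)^2 else 0)"
    unfolding quadratic_form_expand[OF mat_diag_dim x] using entry by (auto intro!: sum.cong)
  then show ?thesis by simp
qed

lemma skew_double_sum_eq_0:
  fixes K :: "nat \<Rightarrow> nat \<Rightarrow> 'a :: linordered_idom"
  assumes skew: "\<And>i j. K j i = - K i j"
  shows "(\<Sum>i<n. \<Sum>j<n. x i * K i j * x j) = 0"
proof -
  let ?S = "\<Sum>i<n. \<Sum>j<n. x i * K i j * x j"
  have flip: "x i * K i j * x j = - (x j * K j i * x i)" for i j
    using skew[of i j] by (simp add: algebra_simps)
  have "?S = (\<Sum>j<n. \<Sum>i<n. x i * K i j * x j)" by (rule sum.swap)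
  also have "\<dots> = (\<Sum>j<n. \<Sum>i<n. - (x j * K j i * x i))"
    by (rule sum.cong[OF refl sum.cong[OF refl flip]])
  also have "\<dots> = - ?S" by (simp add: sum_negf)
  finally show ?thesis by simp
qed

lemma weighted_sum_squares_pos:
  fixes w :: "nat \<Rightarrow> 'a :: linordered_idom"
  assumes w: "\<And>i. i < n \<Longrightarrow> 0 < w i" and x: "x \<in> carrier_vec n" "x \<noteq> 0\<^sub>v n"
  shows "0 < (\<Sum>i<n. w i * (x$i)^2)"
proof -
  obtain k where k: "k < n" "x$k \<noteq> 0"
    using x by (metis carrier_vecD eq_vecI index_zero_vec(1,2))
  have "0 \<le> w i * (x$i)^2" if "i < n" for i
    using w[OF that] by simp
  moreover have "0 < w k * (x$k)^2"
    using w[OF k(1)] k(2) by simp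
  ultimately show ?thesis
    using k(1) by (intro sum_pos2[of _ k]) auto
qed

lemma det_nonzero_if_quadratic_form_pos:
  fixes A :: "'a :: linordered_field mat"
  assumes A: "A \<in> carrier_mat n n"
    and pos: "\<And>x. x \<in> carrier_vec n \<Longrightarrow> x \<noteq> 0\<^sub>v n \<Longrightarrow> 0 < x \<bullet> (A *\<^sub>v x)"
  shows "Determinant.det A \<noteq> 0"
proof
  assume "Determinant.det A = 0"
  then obtain v where "v \<in> carrier_vec n" "v \<noteq> 0\<^sub>v n" "A *\<^sub>v v = 0\<^sub>v n"
    using det_0_iff_vec_prod_zero_field[OF A] by blast
  with pos[of v] show False by simp
qed

lemma minv_mat_inverse:
  fixes A :: "real mat"
  assumes A: "A \<in> carrier_mat n n" and det: "Determinant.det A \<noteq> 0"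
  shows "minv A \<in> carrier_mat n n" "A * minv A = 1\<^sub>m n" "minv A * A = 1\<^sub>m n"
proof -
  have "A \<in> Units (ring_mat TYPE(real) n ())"
    by (rule det_non_zero_imp_unit[OF A det])
  then obtain B where B: "mat_inverse A = Some B"
    using mat_inverse(1)[OF A] by fastforce
  then have "minv A = B" unfolding minv_def by simp
  with mat_inverse(2)[OF A B]
  show "minv A \<in> carrier_mat n n" "A * minv A = 1\<^sub>m n" "minv A * A = 1\<^sub>m n" by auto
qed

lemma invertible_mat_if_det_nonzero:
  fixes A :: "real mat"
  assumes A: "A \<in> carrier_mat n n" and det: "Determinant.det A \<noteq> 0"
  shows "invertible_mat A"
  using minv_mat_inverse[OF assms] A
  unfolding invertible_mat_def inverts_mat_def by auto

lemma minv_eqI: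
  fixes A B :: "real mat"
  assumes A: "A \<in> carrier_mat n n" and B: "B \<in> carrier_mat n n" and AB: "A * B = 1\<^sub>m n"
  shows "minv A = B"
proof -
  have "Determinant.det A * Determinant.det B = 1"
    using det_mult[OF A B] AB by simp
  then have "Determinant.det A \<noteq> 0" by auto
  note inv = minv_mat_inverse[OF A this]
  have "minv A = minv A * (A * B)" using AB inv(1) by simp
  also have "\<dots> = (minv A * A) * B" using inv(1) A B by (rule assoc_mult_mat[symmetric])
  finally show ?thesis using inv(3) B by simp
qed

lemma minv_mat_diag:
  fixes d :: "nat \<Rightarrow> real"
  assumes "\<And>i. i < n \<Longrightarrow> d i \<noteq> 0"
  shows "minv (mat_diag n d) = mat_diag n (\<lambda>i. 1 / d i)"
proof (rule minv_eqI)
  show "mat_diag n d * mat_diag n (\<lambda>i. 1 / d i) = 1\<^sub>m n"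
    unfolding mat_diag_diag using assms by (intro eq_matI) (auto simp: mat_diag_def)
qed auto

lemma inverse_quadratic_form_bounds:
  fixes A :: "real mat"
  assumes A: "A \<in> carrier_mat n n" and e: "e \<in> carrier_vec n" "e \<noteq> 0\<^sub>v n"
    and form: "\<And>x. x \<in> carrier_vec n \<Longrightarrow> x \<noteq> 0\<^sub>v n \<Longrightarrow> (e \<bullet> x)^2 / 2 < x \<bullet> (A *\<^sub>v x)"
  shows "invertible_mat A" "0 < e \<bullet> (minv A *\<^sub>v e)" "e \<bullet> (minv A *\<^sub>v e) < 2"
proof -
  have "0 < x \<bullet> (A *\<^sub>v x)" if "x \<in> carrier_vec n" "x \<noteq> 0\<^sub>v n" for x
    using form[OF that] zero_le_power2[of "e \<bullet> x"] by linarith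
  then have det: "Determinant.det A \<noteq> 0" by (rule det_nonzero_if_quadratic_form_pos[OF A])
  show "invertible_mat A" by (rule invertible_mat_if_det_nonzero[OF A det])
  note inv = minv_mat_inverse[OF A det]
  define y where "y = minv A *\<^sub>v e"
  have y: "y \<in> carrier_vec n" using inv(1) e(1) by (simp add: y_def)
  have Ay: "A *\<^sub>v y = e"
    unfolding y_def using assoc_mult_mat_vec[OF A inv(1) e(1)] inv(2) e(1) by simp
  have "y \<noteq> 0\<^sub>v n"
  proof
    assume "y = 0\<^sub>v n"
    then have "e = 0\<^sub>v n" using Ay A by (auto intro!: eq_vecI)
    with e(2) show False ..
  qed
  define z where "z = e \<bullet> y"
  have "z = y \<bullet> (A *\<^sub>v y)" using comm_scalar_prod[OF e(1) y] Ay by (simp add: z_def)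
  then have "z^2 / 2 < z" using form[OF y \<open>y \<noteq> 0\<^sub>v n\<close>] by (simp add: z_def)
  then have "0 < z * (2 - z)" by (simp add: power2_eq_square algebra_simps)
  then have "0 < z \<and> z < 2" by (auto simp: zero_less_mult_iff)
  then show "0 < e \<bullet> (minv A *\<^sub>v e)" "e \<bullet> (minv A *\<^sub>v e) < 2"
    by (simp_all add: z_def y_def)
qed

lemma sinc_int_minus: "sinc_int (- x) = - sinc_int x"
proof -
  have "sinc_int (- x) = (LBINT t=x..0. sin (pi * - t) / (pi * - t))"
    unfolding sinc_int_def by (subst interval_integral_reflect) simp
  also have "\<dots> = - sinc_int x"
    unfolding sinc_int_def by (subst interval_integral_endpoints_reverse) simp
  finally show ?thesis .
qed

lemma quadratic_form_sinc_Iinv: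
  assumes x: "x \<in> carrier_vec n"
  shows "x \<bullet> (sinc_Iinv n *\<^sub>v x) = (\<Sum>i<n. x$i)^2 / 2"
proof -
  let ?K = "\<lambda>i j. sinc_int (real_of_int (int i - int j))"
  have skew: "?K j i = - ?K i j" for i j
    by (metis minus_diff_eq of_int_minus sinc_int_minus)
  have "sinc_Iinv n \<in> carrier_mat n n" unfolding sinc_Iinv_def by simp
  then have "x \<bullet> (sinc_Iinv n *\<^sub>v x) = (\<Sum>i<n. \<Sum>j<n. x$i * sinc_Iinv n $$ (i,j) * x$j)"
    using x by (rule quadratic_form_expand)
  also have "\<dots> = (\<Sum>i<n. \<Sum>j<n. x$i * x$j / 2 + x$i * ?K i j * x$j)"
    by (auto simp: sinc_Iinv_def algebra_simps intro!: sum.cong)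
  also have "\<dots> = (\<Sum>i<n. x$i)^2 / 2 + (\<Sum>i<n. \<Sum>j<n. x$i * ?K i j * x$j)"
    by (simp add: sum.distrib power2_eq_square sum_product sum_divide_distrib)
  also have "(\<Sum>i<n. \<Sum>j<n. x$i * ?K i j * x$j) = 0"
    using skew by (rule skew_double_sum_eq_0)
  finally show ?thesis by simp
qed

lemma quadratic_form_diag_plus_sinc_Iinv_gt:
  fixes c :: real
  assumes c: "0 < c" and w: "\<And>i. i < n \<Longrightarrow> 0 < w i"
    and x: "x \<in> carrier_vec n" "x \<noteq> 0\<^sub>v n"
  shows "(ones_vec n \<bullet> x)^2 / 2 < x \<bullet> ((c \<cdot>\<^sub>m mat_diag n w + sinc_Iinv n) *\<^sub>v x)"
proof -
  have I: "sinc_Iinv n \<in> carrier_mat n n" unfolding sinc_Iinv_def by simp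
  have "ones_vec n \<bullet> x = (\<Sum>i<n. x$i)"
    using x(1) by (simp add: ones_vec_def scalar_prod_def lessThan_atLeast0)
  moreover have "x \<bullet> ((c \<cdot>\<^sub>m mat_diag n w + sinc_Iinv n) *\<^sub>v x)
      = c * (\<Sum>i<n. w i * (x$i)^2) + (\<Sum>i<n. x$i)^2 / 2"
    by (simp add: quadratic_form_add[OF _ I x(1)] quadratic_form_smult[OF mat_diag_dim x(1)]
        quadratic_form_mat_diag[OF x(1)] quadratic_form_sinc_Iinv[OF x(1)])
  moreover have "0 < c * (\<Sum>i<n. w i * (x$i)^2)"
    using c weighted_sum_squares_pos[OF w x] by simp
  ultimately show ?thesis by simp
qed

lemma sinc_pt_bounds:
  assumes "0 < T"
  shows "0 < sinc_pt h T j" "sinc_pt h T j < T"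
  using assms by (simp_all add: sinc_pt_def add_pos_pos divide_less_eq)

definition sinc_D_entry :: "nat \<Rightarrow> real \<Rightarrow> real \<Rightarrow> nat \<Rightarrow> real" where
  "sinc_D_entry M h T i = h * (sinc_pt h T (int i - int M) * (T - sinc_pt h T (int i - int M)) / T)"

lemma sinc_D_eq_mat_diag: "sinc_D M h T = mat_diag (2*M+1) (sinc_D_entry M h T)"
  unfolding sinc_D_def mat_diag_def sinc_D_entry_def by (rule eq_matI) auto

lemma sinc_D_entry_pos:
  assumes "0 < h" "0 < T"
  shows "0 < sinc_D_entry M h T i"
  using assms sinc_pt_bounds[OF assms(2)] by (simp add: sinc_D_entry_def)

lemma minv_sinc_D:
  assumes "0 < h" "0 < T"
  shows "minv (sinc_D M h T) = mat_diag (2*M+1) (\<lambda>i. 1 / sinc_D_entry M h T i)"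
  unfolding sinc_D_eq_mat_diag
  using sinc_D_entry_pos[OF assms] by (intro minv_mat_diag) (metis less_irrefl)

lemma sinc_system_bounds:
  assumes h: "0 < h" and T: "0 < T" and \<mu>: "0 < \<mu>"
  shows "invertible_mat ((1/\<mu>) \<cdot>\<^sub>m minv (sinc_D M h T) + sinc_Iinv (2*M+1))"
    and "0 < sinc_z M h T \<mu>" "sinc_z M h T \<mu> < 2"
proof -
  let ?n = "2*M+1"
  let ?A = "(1/\<mu>) \<cdot>\<^sub>m minv (sinc_D M h T) + sinc_Iinv ?n"
  have A: "?A \<in> carrier_mat ?n ?n"
    unfolding minv_sinc_D[OF h T] sinc_Iinv_def by simp
  have e_carrier: "ones_vec ?n \<in> carrier_vec ?n" by (simp add: ones_vec_def)
  have e_nonzero: "ones_vec ?n \<noteq> 0\<^sub>v ?n"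
  proof
    assume "ones_vec ?n = 0\<^sub>v ?n"
    then have "ones_vec ?n $ 0 = 0\<^sub>v ?n $ 0" by simp
    then show False by (simp add: ones_vec_def)
  qed
  have "(ones_vec ?n \<bullet> x)^2 / 2 < x \<bullet> (?A *\<^sub>v x)"
    if "x \<in> carrier_vec ?n" "x \<noteq> 0\<^sub>v ?n" for x
    unfolding minv_sinc_D[OF h T]
    using \<mu> sinc_D_entry_pos[OF h T] that by (intro quadratic_form_diag_plus_sinc_Iinv_gt) auto
  note bounds = inverse_quadratic_form_bounds[OF A e_carrier e_nonzero this]
  show "invertible_mat ?A" by (rule bounds(1))
  have "\<mu> \<noteq> 0" using \<mu> by simp
  then have "sinc_z M h T \<mu> = ones_vec ?n \<bullet> (minv ?A *\<^sub>v ones_vec ?n)"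
    unfolding sinc_z_def by (rule if_not_P)
  with bounds(2,3) show "0 < sinc_z M h T \<mu>" "sinc_z M h T \<mu> < 2" by simp_all
qed

theorem lemma3p2:
  fixes M :: nat and h T :: real
  assumes "M \<ge> 1" and "h > 0" and "T > 0"
  shows "(\<forall>\<mu>>0. invertible_mat ((1/\<mu>) \<cdot>\<^sub>m minv (sinc_D M h T) + sinc_Iinv (2*M+1)))
         \<and> (\<forall>\<mu>\<ge>0. 0 \<le> sinc_z M h T \<mu> \<and> sinc_z M h T \<mu> < 2)"
proof (rule conjI; intro allI impI)
  fix \<mu> :: real
  assume "0 < \<mu>"
  then show "invertible_mat ((1/\<mu>) \<cdot>\<^sub>m minv (sinc_D M h T) + sinc_Iinv (2*M+1))"
    by (rule sinc_system_bounds(1)[OF assms(2,3)])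
next
  fix \<mu> :: real
  assume "0 \<le> \<mu>"
  then consider "\<mu> = 0" | "0 < \<mu>" by linarith
  then show "0 \<le> sinc_z M h T \<mu> \<and> sinc_z M h T \<mu> < 2"
  proof cases
    case 1
    then show ?thesis by (simp add: sinc_z_def)
  next
    case 2
    with sinc_system_bounds(2,3)[OF assms(2,3)] show ?thesis by (simp add: less_imp_le)
  qed
qed

end
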